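(* Let $M$ be a $4$-dimensional manifold with local coordinates $(x^1,\dots,x^4)$, $e_i=\partial/\partial x^i$, and Riemannian metric $g$ with components \[(g_{ij})=\begin{pmatrix} A&B&C&B\\ B&A&B&C\\ C&B&A&B\\ B&C&B&A\end{pmatrix},\] $A,B,C$ smooth functions with $A>C>B>0$. Let $P$ be the almost product structure with component matrix having rows $(0,0,1,0),(0,0,0,1),(1,0,0,0),(0,1,0,0)$. Then $(M,g,P)$ belongs to the class $\mathcal{W}_0$, i.e. $F(x,y,z)=g((\nabla_xP)y,z)=0$ identically (equivalently $\nabla P=0$, $\nabla$ the Levi-Civita connection of $g$), if and only if \[A_3=C_1,\quad A_1=C_3,\quad B_3=B_1,\quad B_4=B_2,\quad A_2=C_4,\quad A_4=C_2,\] where $A_i=\partial A/\partial x^i$, $B_i=\partial B/\partial x^i$, $C_i=\partial C/\partial x^i$. *)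

theory Defs
  imports "HOL-Analysis.Analysis"
begin

text \<open>Local coordinates (x^1,...,x^4) on a chart: points are vectors in real^4 ranging
 over an open set U.  Coordinate index k (k = 1..4) corresponds to the element
 coord k of the index type 4; conversely idx i in {0..3} is the position of i.\<close>

definition coord :: "nat \<Rightarrow> 4" where
  "coord k = of_nat (k - 1)"

definition idx :: "4 \<Rightarrow> nat" where
  "idx i = nat (Rep_bit0 i)"

definition pd :: "4 \<Rightarrow> (real^4 \<Rightarrow> real) \<Rightarrow> real^4 \<Rightarrow> real" where
  "pd i f x = frechet_derivative f (at x) (axis i 1)"

fun pds :: "4 list \<Rightarrow> (real^4 \<Rightarrow> real) \<Rightarrow> real^4 \<Rightarrow> real" where
  "pds [] f = f"
| "pds (i # is) f = pd i (pds is f)"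

definition smooth_on :: "(real^4) set \<Rightarrow> (real^4 \<Rightarrow> real) \<Rightarrow> bool" where
  "smooth_on U f \<longleftrightarrow> (\<forall>is. pds is f differentiable_on U)"

text \<open>Christoffel symbols of the Levi-Civita connection of a metric with component
 matrix g x (entry g x \$ i \$ j = g_ij):
 Gamma^k_ij = 1/2 g^kl (d_i g_jl + d_j g_il - d_l g_ij), so that nabla_{e_i} e_j = Gamma^k_ij e_k.\<close>
definition christoffel :: "(real^4 \<Rightarrow> real^4^4) \<Rightarrow> 4 \<Rightarrow> 4 \<Rightarrow> 4 \<Rightarrow> real^4 \<Rightarrow> real" where
  "christoffel g k i j x = (1/2) * (\<Sum>l\<in>UNIV. matrix_inv (g x) $ k $ l *
      (pd i (\<lambda>y. g y $ j $ l) x + pd j (\<lambda>y. g y $ i $ l) x - pd l (\<lambda>y. g y $ i $ j) x))"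

text \<open>Components of the covariant derivative of a (1,1)-tensor P (entry P x \$ k \$ j = P^k_j,
 i.e. P e_j = P^k_j e_k): (nabla_{e_i} P) e_j = (nabla_i P)^k_j e_k.\<close>
definition nablaP :: "(real^4 \<Rightarrow> real^4^4) \<Rightarrow> (real^4 \<Rightarrow> real^4^4) \<Rightarrow> 4 \<Rightarrow> 4 \<Rightarrow> 4 \<Rightarrow> real^4 \<Rightarrow> real" where
  "nablaP g P i k j x = pd i (\<lambda>y. P y $ k $ j) x
      + (\<Sum>m\<in>UNIV. christoffel g k i m x * P x $ m $ j)
      - (\<Sum>m\<in>UNIV. christoffel g m i j x * P x $ k $ m)"

text \<open>F(e_i, e_j, e_l) = g((nabla_{e_i} P) e_j, e_l).\<close>
definition Ften :: "(real^4 \<Rightarrow> real^4^4) \<Rightarrow> (real^4 \<Rightarrow> real^4^4) \<Rightarrow> 4 \<Rightarrow> 4 \<Rightarrow> 4 \<Rightarrow> real^4 \<Rightarrow> real" where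
  "Ften g P i j l x = (\<Sum>k\<in>UNIV. g x $ k $ l * nablaP g P i k j x)"

text \<open>Class W_0: F vanishes identically (F is trilinear, so this is vanishing on the
 coordinate frame at every point of the chart).\<close>
definition in_W0 :: "(real^4) set \<Rightarrow> (real^4 \<Rightarrow> real^4^4) \<Rightarrow> (real^4 \<Rightarrow> real^4^4) \<Rightarrow> bool" where
  "in_W0 U g P \<longleftrightarrow> (\<forall>x\<in>U. \<forall>i j l. Ften g P i j l x = 0)"

definition gABC :: "(real^4 \<Rightarrow> real) \<Rightarrow> (real^4 \<Rightarrow> real) \<Rightarrow> (real^4 \<Rightarrow> real) \<Rightarrow> real^4 \<Rightarrow> real^4^4" where
  "gABC A B C x = (\<chi> i j. [[A x, B x, C x, B x],
                            [B x, A x, B x, C x],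
                            [C x, B x, A x, B x],
                            [B x, C x, B x, A x]] ! idx i ! idx j)"

definition Pstr :: "real^4 \<Rightarrow> real^4^4" where
  "Pstr x = (\<chi> i j. [[0, 0, 1, 0],
                      [0, 0, 0, 1],
                      [1, 0, 0, 0],
                      [0, 1, 0, 0]] ! idx i ! idx j)"

end

theory Submission
  imports Defs
begin

text \<open>P has constant components and is g-symmetric, so lowering the free index of
 \<open>\<nabla>P\<close> cancels the inverse metric and F(e_i, e_j, e_l) = \<Gamma>_{i,Pe_j,l} - \<Gamma>_{i,j,Pe_l}
 with Christoffel symbols of the first kind. Each component is thus a linear combination of
 the first partial derivatives of A, B, C with constant coefficients, and the 64 components
 span exactly the six stated equations.\<close>

lemma four_eq_zero: "(4::4) = 0"
  by simp

lemma five_eq_one: "(5::4) = 1"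
  by simp

lemmas forall_4' = forall_4[unfolded four_eq_zero]
lemmas sum_4' = sum_4[unfolded four_eq_zero]

lemma idx_simps [simp]: "idx 0 = 0" "idx 1 = 1" "idx 2 = 2" "idx 3 = 3"
  unfolding idx_def by (simp_all add: bit0.Rep_0 bit0.Rep_1 bit0.Rep_numeral)

lemma coord_simps [simp]: "coord 1 = 0" "coord 2 = 1" "coord 3 = 2" "coord 4 = 3"
  unfolding coord_def by simp_all

lemma matrix_inv_right:
  "invertible M \<Longrightarrow> M ** matrix_inv M = mat 1"
  unfolding invertible_def matrix_inv_def by (rule someI2_ex) auto

definition christoffel1 :: "(real^4 \<Rightarrow> real^4^4) \<Rightarrow> 4 \<Rightarrow> 4 \<Rightarrow> 4 \<Rightarrow> real^4 \<Rightarrow> real" where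
  "christoffel1 g i j l x =
     1/2 * (pd i (\<lambda>y. g y $ j $ l) x + pd j (\<lambda>y. g y $ i $ l) x - pd l (\<lambda>y. g y $ i $ j) x)"

lemma christoffel_eq_raise_christoffel1:
  "christoffel g k i j x = (\<Sum>l\<in>UNIV. matrix_inv (g x) $ k $ l * christoffel1 g i j l x)"
  by (simp add: christoffel_def christoffel1_def sum_distrib_left mult_ac)

lemma lower_christoffel:
  assumes "invertible (g x)" and "transpose (g x) = g x"
  shows "(\<Sum>k\<in>UNIV. g x $ k $ l * christoffel g k i j x) = christoffel1 g i j l x"
proof -
  have sym: "g x $ k $ l = g x $ l $ k" for k l
    using arg_cong[OF assms(2), of "\<lambda>M. M $ l $ k"] by (simp add: transpose_def)
  have "(\<Sum>k\<in>UNIV. g x $ k $ l * christoffel g k i j x)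
      = (\<Sum>k\<in>UNIV. \<Sum>n\<in>UNIV. g x $ l $ k * matrix_inv (g x) $ k $ n * christoffel1 g i j n x)"
    unfolding christoffel_eq_raise_christoffel1 sym[of _ l] by (simp add: sum_distrib_left mult_ac)
  also have "\<dots> = (\<Sum>n\<in>UNIV. (\<Sum>k\<in>UNIV. g x $ l $ k * matrix_inv (g x) $ k $ n) * christoffel1 g i j n x)"
    by (subst sum.swap) (simp add: sum_distrib_right)
  also have "\<dots> = (\<Sum>n\<in>UNIV. (mat 1 :: real^4^4) $ l $ n * christoffel1 g i j n x)"
    unfolding matrix_inv_right[OF assms(1), symmetric] by (simp add: matrix_matrix_mult_def)
  also have "\<dots> = christoffel1 g i j l x"
    by (simp add: mat_def of_bool_def[symmetric])
  finally show ?thesis .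
qed

lemma Ften_const_symmetric:
  fixes g :: "real^4 \<Rightarrow> real^4^4" and Q :: "real^4^4"
  assumes "invertible (g x)" and "transpose (g x) = g x"
    and "transpose Q ** g x = g x ** Q"
  shows "Ften g (\<lambda>_. Q) i j l x =
    (\<Sum>m\<in>UNIV. Q $ m $ j * christoffel1 g i m l x) - (\<Sum>k\<in>UNIV. Q $ k $ l * christoffel1 g i j k x)"
proof -
  note lower = lower_christoffel[where g=g and x=x, OF assms(1,2), symmetric]
  have Q_sym: "(\<Sum>k\<in>UNIV. g x $ k $ l * Q $ k $ m) = (\<Sum>k\<in>UNIV. g x $ m $ k * Q $ k $ l)" for l m
    using arg_cong[OF assms(3), of "\<lambda>M. M $ m $ l"]
    by (simp add: matrix_matrix_mult_def transpose_def mult_ac)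
  have "Ften g (\<lambda>_. Q) i j l x =
      (\<Sum>k\<in>UNIV. \<Sum>m\<in>UNIV. g x $ k $ l * christoffel g k i m x * Q $ m $ j)
    - (\<Sum>k\<in>UNIV. \<Sum>m\<in>UNIV. g x $ k $ l * christoffel g m i j x * Q $ k $ m)"
    unfolding Ften_def nablaP_def pd_def
    by (simp add: sum_distrib_left right_diff_distrib sum_subtractf mult_ac)
  also have "(\<Sum>k\<in>UNIV. \<Sum>m\<in>UNIV. g x $ k $ l * christoffel g k i m x * Q $ m $ j)
      = (\<Sum>m\<in>UNIV. Q $ m $ j * christoffel1 g i m l x)"
    unfolding lower sum_distrib_left by (subst sum.swap) (simp add: mult_ac)
  also have "(\<Sum>k\<in>UNIV. \<Sum>m\<in>UNIV. g x $ k $ l * christoffel g m i j x * Q $ k $ m)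
      = (\<Sum>m\<in>UNIV. christoffel g m i j x * (\<Sum>k\<in>UNIV. g x $ k $ l * Q $ k $ m))"
    unfolding sum_distrib_left by (subst sum.swap) (simp add: mult_ac)
  also have "\<dots> = (\<Sum>k\<in>UNIV. Q $ k $ l * christoffel1 g i j k x)"
    unfolding Q_sym lower sum_distrib_left by (subst sum.swap) (simp add: mult_ac)
  finally show ?thesis .
qed

definition abc_matrix :: "real \<Rightarrow> real \<Rightarrow> real \<Rightarrow> real^4^4" where
  "abc_matrix a b c =
     (\<chi> i j. [[a, b, c, b], [b, a, b, c], [c, b, a, b], [b, c, b, a]] ! idx i ! idx j)"

lemma gABC_eq_abc_matrix: "gABC A B C x = abc_matrix (A x) (B x) (C x)"
  unfolding gABC_def abc_matrix_def ..

lemma abc_matrix_entries [simp]: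
  "abc_matrix a b c $ 0 $ 0 = a" "abc_matrix a b c $ 0 $ 1 = b"
  "abc_matrix a b c $ 0 $ 2 = c" "abc_matrix a b c $ 0 $ 3 = b"
  "abc_matrix a b c $ 1 $ 0 = b" "abc_matrix a b c $ 1 $ 1 = a"
  "abc_matrix a b c $ 1 $ 2 = b" "abc_matrix a b c $ 1 $ 3 = c"
  "abc_matrix a b c $ 2 $ 0 = c" "abc_matrix a b c $ 2 $ 1 = b"
  "abc_matrix a b c $ 2 $ 2 = a" "abc_matrix a b c $ 2 $ 3 = b"
  "abc_matrix a b c $ 3 $ 0 = b" "abc_matrix a b c $ 3 $ 1 = c"
  "abc_matrix a b c $ 3 $ 2 = b" "abc_matrix a b c $ 3 $ 3 = a"
  unfolding abc_matrix_def by simp_all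

lemma abc_matrix_mult:
  "abc_matrix a b c ** abc_matrix a' b' c' =
     abc_matrix (a*a' + 2*b*b' + c*c') (a*b' + b*a' + b*c' + c*b') (a*c' + 2*b*b' + c*a')"
  by (simp add: matrix_matrix_mult_def vec_eq_iff forall_4' sum_4' algebra_simps)

lemma abc_matrix_one: "abc_matrix 1 0 0 = mat 1"
  by (simp add: vec_eq_iff forall_4' mat_def)

lemma transpose_abc_matrix: "transpose (abc_matrix a b c) = abc_matrix a b c"
  by (simp add: vec_eq_iff forall_4' transpose_def)

text \<open>The matrices abc_matrix are simultaneously diagonalised by the eigenvectors
 (1,1,1,1), (1,0,-1,0), (0,1,0,-1) and (1,-1,1,-1); abc_eigen_matrix s t u is the one with
 eigenvalues s, t, t, u.\<close>
definition abc_eigen_matrix :: "real \<Rightarrow> real \<Rightarrow> real \<Rightarrow> real^4^4" where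
  "abc_eigen_matrix s t u = abc_matrix ((s + 2*t + u)/4) ((s - u)/4) ((s - 2*t + u)/4)"

lemma abc_matrix_eq_abc_eigen_matrix:
  "abc_matrix a b c = abc_eigen_matrix (a + 2*b + c) (a - c) (a - 2*b + c)"
  unfolding abc_eigen_matrix_def by (simp add: algebra_simps add_divide_distrib diff_divide_distrib)

lemma abc_eigen_matrix_mult:
  "abc_eigen_matrix s t u ** abc_eigen_matrix s' t' u' = abc_eigen_matrix (s * s') (t * t') (u * u')"
  unfolding abc_eigen_matrix_def abc_matrix_mult
  by (simp add: algebra_simps add_divide_distrib diff_divide_distrib)

lemma invertible_abc_eigen_matrix:
  assumes "s \<noteq> 0" and "t \<noteq> 0" and "u \<noteq> 0"
  shows "invertible (abc_eigen_matrix s t u)"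
proof -
  have one: "abc_eigen_matrix 1 1 1 = mat 1"
    unfolding abc_eigen_matrix_def abc_matrix_one[symmetric] by simp
  show ?thesis
    unfolding invertible_def
    by (rule exI[of _ "abc_eigen_matrix (1/s) (1/t) (1/u)"])
      (simp add: abc_eigen_matrix_mult assms one)
qed

lemma invertible_abc_matrix:
  assumes "a + 2*b + c \<noteq> 0" and "a \<noteq> c" and "a - 2*b + c \<noteq> 0"
  shows "invertible (abc_matrix a b c)"
  unfolding abc_matrix_eq_abc_eigen_matrix
  using assms by (intro invertible_abc_eigen_matrix) simp_all

definition swap_matrix :: "real^4^4" where
  "swap_matrix = (\<chi> i j. [[0, 0, 1, 0], [0, 0, 0, 1], [1, 0, 0, 0], [0, 1, 0, 0]] ! idx i ! idx j)"

lemma Pstr_eq_swap_matrix: "Pstr = (\<lambda>_. swap_matrix)"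
  unfolding Pstr_def swap_matrix_def ..

lemma swap_matrix_entries [simp]:
  "swap_matrix $ 0 $ 0 = 0" "swap_matrix $ 0 $ 1 = 0" "swap_matrix $ 0 $ 2 = 1" "swap_matrix $ 0 $ 3 = 0"
  "swap_matrix $ 1 $ 0 = 0" "swap_matrix $ 1 $ 1 = 0" "swap_matrix $ 1 $ 2 = 0" "swap_matrix $ 1 $ 3 = 1"
  "swap_matrix $ 2 $ 0 = 1" "swap_matrix $ 2 $ 1 = 0" "swap_matrix $ 2 $ 2 = 0" "swap_matrix $ 2 $ 3 = 0"
  "swap_matrix $ 3 $ 0 = 0" "swap_matrix $ 3 $ 1 = 1" "swap_matrix $ 3 $ 2 = 0" "swap_matrix $ 3 $ 3 = 0"
  unfolding swap_matrix_def by simp_all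

lemma swap_matrix_entry: "swap_matrix $ m $ j = of_bool (m = j + 2)"
  using exhaust_4[of j] exhaust_4[of m] by (elim disjE) (simp_all add: four_eq_zero)

lemma swap_matrix_abc_symmetric:
  "transpose swap_matrix ** abc_matrix a b c = abc_matrix a b c ** swap_matrix"
  by (simp add: vec_eq_iff forall_4' sum_4' matrix_matrix_mult_def transpose_def)

text \<open>Index arithmetic is modulo 4, so j + 2 is the index of P e_j.\<close>
lemma Ften_gABC_Pstr_eq:
  assumes "A x \<noteq> C x" and "A x + 2 * B x + C x \<noteq> 0" and "A x - 2 * B x + C x \<noteq> 0"
  shows "Ften (gABC A B C) Pstr i j l x =
    christoffel1 (gABC A B C) i (j + 2) l x - christoffel1 (gABC A B C) i j (l + 2) x"
proof -
  have "Ften (gABC A B C) Pstr i j l x =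
      (\<Sum>m\<in>UNIV. swap_matrix $ m $ j * christoffel1 (gABC A B C) i m l x)
    - (\<Sum>k\<in>UNIV. swap_matrix $ k $ l * christoffel1 (gABC A B C) i j k x)"
    unfolding Pstr_eq_swap_matrix
    by (rule Ften_const_symmetric)
      (use assms in \<open>simp_all add: gABC_eq_abc_matrix invertible_abc_matrix
          transpose_abc_matrix swap_matrix_abc_symmetric\<close>)
  then show ?thesis
    by (simp add: swap_matrix_entry)
qed

lemma Ften_gABC_Pstr_vanishes_iff:
  assumes "A x \<noteq> C x" and "A x + 2 * B x + C x \<noteq> 0" and "A x - 2 * B x + C x \<noteq> 0"
  shows "(\<forall>i j l. Ften (gABC A B C) Pstr i j l x = 0) \<longleftrightarrow>
    (pd (coord 3) A x = pd (coord 1) C x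
          \<and> pd (coord 1) A x = pd (coord 3) C x
          \<and> pd (coord 3) B x = pd (coord 1) B x
          \<and> pd (coord 4) B x = pd (coord 2) B x
          \<and> pd (coord 2) A x = pd (coord 4) C x
          \<and> pd (coord 4) A x = pd (coord 2) C x)"
    (is "?W0 \<longleftrightarrow> ?eqs")
proof
  assume ?W0
  txt \<open>Up to sign these six components are the six equations; all other components are
    linear combinations of them.\<close>
  then have "Ften (gABC A B C) Pstr 0 0 0 x = 0" "Ften (gABC A B C) Pstr 2 2 2 x = 0"
    "Ften (gABC A B C) Pstr 1 0 0 x = 0" "Ften (gABC A B C) Pstr 0 1 1 x = 0"
    "Ften (gABC A B C) Pstr 3 3 3 x = 0" "Ften (gABC A B C) Pstr 1 1 1 x = 0"
    by blast+
  then show ?eqs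
    unfolding Ften_gABC_Pstr_eq[where A=A and B=B and C=C and x=x, OF assms]
      christoffel1_def gABC_eq_abc_matrix coord_simps
    by (simp add: four_eq_zero five_eq_one)
next
  assume ?eqs
  then show ?W0
    unfolding Ften_gABC_Pstr_eq[where A=A and B=B and C=C and x=x, OF assms]
      christoffel1_def gABC_eq_abc_matrix coord_simps
    by (simp add: forall_4' four_eq_zero five_eq_one)
qed

theorem theorem3p4:
  fixes A B C :: "real^4 \<Rightarrow> real" and U :: "(real^4) set"
  assumes "open U"
    and "smooth_on U A" and "smooth_on U B" and "smooth_on U C"
    and "\<forall>x\<in>U. A x > C x \<and> C x > B x \<and> B x > 0"
  shows "in_W0 U (gABC A B C) Pstr \<longleftrightarrow>
    (\<forall>x\<in>U. pd (coord 3) A x = pd (coord 1) C x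
          \<and> pd (coord 1) A x = pd (coord 3) C x
          \<and> pd (coord 3) B x = pd (coord 1) B x
          \<and> pd (coord 4) B x = pd (coord 2) B x
          \<and> pd (coord 2) A x = pd (coord 4) C x
          \<and> pd (coord 4) A x = pd (coord 2) C x)"
proof -
  have "A x \<noteq> C x \<and> A x + 2 * B x + C x \<noteq> 0 \<and> A x - 2 * B x + C x \<noteq> 0" if "x \<in> U" for x
    using assms(5) that by fastforce
  then show ?thesis
    unfolding in_W0_def using Ften_gABC_Pstr_vanishes_iff by blast
qed

end
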